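(* Let $G$ be a connected cubic graph of order at least $6$. Then $\alpha(G)\geq \frac{3}{5}\,\mathrm{diss}(G)$.
   Context: All graphs are finite, simple and undirected. $\alpha(G)$ denotes the independence number of $G$. A set $D$ of vertices of $G$ is a dissociation set if the subgraph $G[D]$ induced by $D$ has maximum degree at most $1$; the dissociation number $\mathrm{diss}(G)$ is the maximum order of a dissociation set in $G$. *)

theory Defs
  imports Complex_Main
begin

definition simple_graph :: "'a set \<Rightarrow> ('a \<Rightarrow> 'a \<Rightarrow> bool) \<Rightarrow> bool" where
  "simple_graph V E \<longleftrightarrow> finite V \<and> (\<forall>u v. E u v \<longrightarrow> u \<in> V \<and> v \<in> V) \<and>
     (\<forall>u v. E u v \<longrightarrow> E v u) \<and> (\<forall>v. \<not> E v v)"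

definition neighbors :: "'a set \<Rightarrow> ('a \<Rightarrow> 'a \<Rightarrow> bool) \<Rightarrow> 'a \<Rightarrow> 'a set" where
  "neighbors V E v = {u \<in> V. E v u}"

definition degree :: "'a set \<Rightarrow> ('a \<Rightarrow> 'a \<Rightarrow> bool) \<Rightarrow> 'a \<Rightarrow> nat" where
  "degree V E v = card (neighbors V E v)"

definition cubic :: "'a set \<Rightarrow> ('a \<Rightarrow> 'a \<Rightarrow> bool) \<Rightarrow> bool" where
  "cubic V E \<longleftrightarrow> (\<forall>v\<in>V. degree V E v = 3)"

definition connected_graph :: "'a set \<Rightarrow> ('a \<Rightarrow> 'a \<Rightarrow> bool) \<Rightarrow> bool" where
  "connected_graph V E \<longleftrightarrow> (\<forall>u\<in>V. \<forall>v\<in>V. (\<lambda>x y. E x y \<and> x \<in> V \<and> y \<in> V)\<^sup>*\<^sup>* u v)"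

definition independent_set :: "'a set \<Rightarrow> ('a \<Rightarrow> 'a \<Rightarrow> bool) \<Rightarrow> 'a set \<Rightarrow> bool" where
  "independent_set V E S \<longleftrightarrow> S \<subseteq> V \<and> (\<forall>u\<in>S. \<forall>v\<in>S. \<not> E u v)"

definition dissociation_set :: "'a set \<Rightarrow> ('a \<Rightarrow> 'a \<Rightarrow> bool) \<Rightarrow> 'a set \<Rightarrow> bool" where
  "dissociation_set V E D \<longleftrightarrow> D \<subseteq> V \<and> (\<forall>v\<in>D. card {u \<in> D. E v u} \<le> 1)"

definition independence_number :: "'a set \<Rightarrow> ('a \<Rightarrow> 'a \<Rightarrow> bool) \<Rightarrow> nat" where
  "independence_number V E = Max (card ` {S. independent_set V E S})"

definition dissociation_number :: "'a set \<Rightarrow> ('a \<Rightarrow> 'a \<Rightarrow> bool) \<Rightarrow> nat" where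
  "dissociation_number V E = Max (card ` {D. dissociation_set V E D})"

end

theory Submission
  imports Defs
begin

text \<open>A connected cubic graph on more than four vertices is not \<open>K\<^sub>4\<close>, so by Brooks' theorem it
  is 3-colourable and \<open>n \<le> 3 \<alpha>\<close>. For a maximum dissociation set \<open>D\<close>, choose a maximum independent
  set \<open>S\<close> with \<open>|S - D|\<close> as large as possible. Each vertex of \<open>D - S\<close> has at least two neighbours
  outside \<open>D\<close>. Counted from the other side, a vertex of \<open>S - D\<close> receives at most three such edges
  minus its edges to \<open>R = V - D - S\<close>, and a vertex of \<open>R\<close> at most one more than its number of
  neighbours in \<open>S - D\<close>, since otherwise exchanging it into \<open>S\<close> would enlarge \<open>S - D\<close>. Hence
  \<open>2 |D - S| \<le> 3 |S - D| + |R|\<close>, i.e. \<open>3 |D| \<le> 2 \<alpha> + n \<le> 5 \<alpha>\<close>.\<close>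

definition proper_colouring ::
    "'a set \<Rightarrow> ('a \<Rightarrow> 'a \<Rightarrow> bool) \<Rightarrow> ('a \<Rightarrow> 'b set) \<Rightarrow> ('a \<Rightarrow> 'b) \<Rightarrow> bool" where
  "proper_colouring U E L c \<longleftrightarrow>
     (\<forall>x\<in>U. c x \<in> L x) \<and> (\<forall>x\<in>U. \<forall>y\<in>U. E x y \<longrightarrow> c x \<noteq> c y)"

definition component_closed :: "'a set \<Rightarrow> ('a \<Rightarrow> 'a \<Rightarrow> bool) \<Rightarrow> 'a set \<Rightarrow> bool" where
  "component_closed U E K \<longleftrightarrow> K \<subseteq> U \<and> (\<forall>x\<in>K. \<forall>y\<in>U. E x y \<longrightarrow> y \<in> K)"

lemma sum_card_adjacent_swap:
  assumes "finite A" "finite B" "\<And>x y. E x y \<Longrightarrow> E y x"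
  shows "(\<Sum>x\<in>A. card {y\<in>B. E x y}) = (\<Sum>y\<in>B. card {x\<in>A. E y x})"
proof -
  have "(\<Sum>x\<in>A. card {y\<in>B. E x y}) = (\<Sum>x\<in>A. \<Sum>y\<in>B. if E x y then 1 else 0)"
    using assms by (simp add: sum.inter_filter[symmetric])
  also have "\<dots> = (\<Sum>y\<in>B. \<Sum>x\<in>A. if E y x then 1 else 0)"
  proof (subst sum.swap, intro sum.cong refl)
    show "(if E x y then 1 else 0) = (if E y x then 1 else 0)" for x y :: 'a
      using assms(3) by auto
  qed
  also have "\<dots> = (\<Sum>y\<in>B. card {x\<in>A. E y x})"
    using assms by (simp add: sum.inter_filter[symmetric])
  finally show ?thesis .
qed

lemma proper_colouring_extend:
  assumes "finite U" "x \<in> U" "finite (L x)" "card {y\<in>U. E x y} < card (L x)"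
    and sym: "\<And>a b. E a b \<Longrightarrow> E b a" and irrefl: "\<And>a. \<not> E a a"
    and c: "proper_colouring (U - {x}) E L c"
  shows "\<exists>c'. proper_colouring U E L c'"
proof -
  have "card (c ` {y\<in>U. E x y}) < card (L x)"
    using assms(4) card_image_le[of "{y\<in>U. E x y}" c] \<open>finite U\<close> by simp
  then have "\<not> L x \<subseteq> c ` {y\<in>U. E x y}"
    using card_mono[of "c ` {y\<in>U. E x y}" "L x"] \<open>finite U\<close> by auto
  then obtain col where col: "col \<in> L x" "col \<notin> c ` {y\<in>U. E x y}"
    by blast
  have "(c(x := col)) y \<noteq> (c(x := col)) z" if "y \<in> U" "z \<in> U" "E y z" for y z
  proof -
    have "y \<noteq> z" using \<open>E y z\<close> irrefl by blast
    then show ?thesis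
      using c col that sym[OF \<open>E y z\<close>] unfolding proper_colouring_def by auto
  qed
  then have "proper_colouring U E L (c(x := col))"
    using c col \<open>x \<in> U\<close> unfolding proper_colouring_def by auto
  then show ?thesis by blast
qed

text \<open>Greedy colouring from lists: repeatedly remove a vertex with fewer neighbours than colours.\<close>
lemma list_colouring_exists:
  assumes "finite U" and sym: "\<And>a b. E a b \<Longrightarrow> E b a" and irrefl: "\<And>a. \<not> E a a"
    and "\<And>x. x \<in> U \<Longrightarrow> finite (L x)"
    and "\<And>x. x \<in> U \<Longrightarrow> card {y\<in>U. E x y} \<le> card (L x)"
    and "\<And>K. component_closed U E K \<Longrightarrow> K \<noteq> {} \<Longrightarrow> \<exists>x\<in>K. card {y\<in>U. E x y} < card (L x)"
  shows "\<exists>c. proper_colouring U E L c"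
  using assms(1,4-)
proof (induction U rule: finite_remove_induct)
  case empty
  show ?case by (simp add: proper_colouring_def)
next
  case (remove U)
  have "component_closed U E U" by (simp add: component_closed_def)
  then obtain x where x: "x \<in> U" "card {y\<in>U. E x y} < card (L x)"
    using remove.prems(3) remove.hyps(2) by blast
  have less_degree: "card {y\<in>U - {x}. E z y} \<le> card {y\<in>U. E z y}" for z
    using \<open>finite U\<close> by (intro card_mono) auto
  have less_degree_adj: "card {y\<in>U - {x}. E z y} < card {y\<in>U. E z y}" if "E z x" for z
    using \<open>finite U\<close> x(1) that by (intro psubset_card_mono) auto
  have "\<exists>z\<in>K. card {y\<in>U - {x}. E z y} < card (L z)"
    if K: "component_closed (U - {x}) E K" "K \<noteq> {}" for K
  proof (cases "\<exists>z\<in>K. E z x")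
    case True
    then obtain z where z: "z \<in> K" "E z x" by blast
    then have "z \<in> U" using K(1) unfolding component_closed_def by blast
    then show ?thesis
      using z less_degree_adj[OF z(2)] remove.prems(2)[of z] by (meson less_le_trans)
  next
    case False
    then have "component_closed U E K" using K(1) unfolding component_closed_def by blast
    then obtain z where "z \<in> K" "card {y\<in>U. E z y} < card (L z)"
      using remove.prems(3) K(2) by blast
    then show ?thesis using less_degree[of z] by (meson le_less_trans)
  qed
  moreover have "card {y\<in>U - {x}. E z y} \<le> card (L z)" if "z \<in> U - {x}" for z
    using that less_degree[of z] remove.prems(2)[of z] by simp
  ultimately obtain c where "proper_colouring (U - {x}) E L c"
    using remove.IH[OF x(1)] remove.prems(1) by blast
  then show ?case
    using proper_colouring_extend[where E = E and L = L,
        OF remove.hyps(1) x(1) remove.prems(1)[OF x(1)] x(2) sym irrefl]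
    by blast
qed

lemma less_3_cases: "(n::nat) < 3 \<Longrightarrow> n = 0 \<or> n = 1 \<or> n = 2"
  by arith

text \<open>At most two pairs forbid at most two of the three rotations \<open>k\<close>.\<close>
lemma exists_rotation_avoiding:
  fixes f g :: "'a \<Rightarrow> nat"
  assumes "finite P" "card P \<le> 2" "\<And>x y. (x, y) \<in> P \<Longrightarrow> g y < 3"
  obtains k where "k < 3" "\<And>x y. (x, y) \<in> P \<Longrightarrow> f x \<noteq> (g y + k) mod 3"
proof -
  define bad where "bad = (\<lambda>(x, y). (f x + 3 - g y) mod 3) ` P"
  have "card bad \<le> card P"
    unfolding bad_def by (rule card_image_le[OF assms(1)])
  then have "card bad < card {..<3::nat}" using assms(2) by simp
  then have "\<not> {..<3} \<subseteq> bad"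
    using assms(1) unfolding bad_def by (meson card_mono finite_imageI leD)
  then obtain k where k: "k < 3" "k \<notin> bad" by blast
  have "f x \<noteq> (g y + k) mod 3" if "(x, y) \<in> P" for x y
  proof
    assume "f x = (g y + k) mod 3"
    then have "(f x + 3 - g y) mod 3 = k"
      using assms(3)[OF that] k(1) by (auto dest!: less_3_cases)
    then show False using k(2) that unfolding bad_def by force
  qed
  then show thesis using that k(1) by blast
qed

lemma rotate_mod_3_inj:
  "(b::nat) < 3 \<Longrightarrow> b' < 3 \<Longrightarrow> k < 3 \<Longrightarrow> (b + k) mod 3 = (b' + k) mod 3 \<Longrightarrow> b = b'"
  by (auto dest!: less_3_cases)

locale finite_graph =
  fixes V :: "'a set" and E :: "'a \<Rightarrow> 'a \<Rightarrow> bool"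
  assumes simple: "simple_graph V E"
begin

lemma finite_vertices [simp]: "finite V"
  using simple unfolding simple_graph_def by blast

lemma adj_in_vertices: "E x y \<Longrightarrow> x \<in> V" "E x y \<Longrightarrow> y \<in> V"
  using simple unfolding simple_graph_def by blast+

lemma adj_sym: "E x y \<Longrightarrow> E y x"
  using simple unfolding simple_graph_def by blast

lemma adj_irrefl: "\<not> E x x"
  using simple unfolding simple_graph_def by blast

lemma finite_neighbourhood: "finite {y\<in>A. E x y}"
  by (rule finite_subset[of _ V]) (auto dest: adj_in_vertices(2))

definition cut_edges :: "'a set \<Rightarrow> ('a \<times> 'a) set" where
  "cut_edges A = {(x, y). x \<in> A \<and> y \<in> V - A \<and> E x y}"

lemma finite_cut_edges: "finite (cut_edges A)"
proof (rule finite_subset)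
  show "cut_edges A \<subseteq> V \<times> V"
    unfolding cut_edges_def by (blast dest: adj_in_vertices)
qed (simp add: finite_vertices)

lemma card_cut_edges_closed_remove_two:
  assumes "component_closed (V - {u, w}) E K" "u \<noteq> w"
  shows "card (cut_edges K) = card {x\<in>K. E u x} + card {x\<in>K. E w x}"
proof -
  have cut_eq: "cut_edges K = (\<lambda>x. (x, u)) ` {x\<in>K. E u x} \<union> (\<lambda>x. (x, w)) ` {x\<in>K. E w x}"
  proof (intro equalityI subsetI)
    fix p assume "p \<in> cut_edges K"
    then obtain x y where p: "p = (x, y)" "x \<in> K" "y \<in> V - K" "E x y"
      unfolding cut_edges_def by blast
    then have "y = u \<or> y = w" using assms(1) unfolding component_closed_def by blast
    then show "p \<in> (\<lambda>x. (x, u)) ` {x\<in>K. E u x} \<union> (\<lambda>x. (x, w)) ` {x\<in>K. E w x}"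
      using p adj_sym[OF p(4)] by blast
  next
    fix p assume "p \<in> (\<lambda>x. (x, u)) ` {x\<in>K. E u x} \<union> (\<lambda>x. (x, w)) ` {x\<in>K. E w x}"
    then obtain x y where "p = (x, y)" "x \<in> K" "y = u \<or> y = w" "E y x" by blast
    then show "p \<in> cut_edges K"
      using assms(1) adj_sym[of y x] adj_in_vertices(1)[of y x]
      unfolding cut_edges_def component_closed_def by blast
  qed
  show ?thesis
    unfolding cut_eq using assms(2)
    by (subst card_Un_disjoint) (auto simp: finite_neighbourhood card_image inj_on_def)
qed

lemma card_le_independence_number:
  assumes "independent_set V E S"
  shows "card S \<le> independence_number V E"
proof -
  have "finite {S. independent_set V E S}"
    using finite_vertices unfolding independent_set_def by simp
  then show ?thesis
    unfolding independence_number_def using assms by (intro Max_ge) auto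
qed

lemma independence_number_attained:
  "\<exists>S. independent_set V E S \<and> card S = independence_number V E"
proof -
  have "finite {S. independent_set V E S}" "{} \<in> {S. independent_set V E S}"
    using finite_vertices unfolding independent_set_def by simp_all
  then have "independence_number V E \<in> card ` {S. independent_set V E S}"
    unfolding independence_number_def by (intro Max_in) auto
  then show ?thesis by auto
qed

lemma dissociation_number_attained:
  "\<exists>D. dissociation_set V E D \<and> card D = dissociation_number V E"
proof -
  have "finite {D. dissociation_set V E D}" "{} \<in> {D. dissociation_set V E D}"
    using finite_vertices unfolding dissociation_set_def by simp_all
  then have "dissociation_number V E \<in> card ` {D. dissociation_set V E D}"
    unfolding dissociation_number_def by (intro Max_in) auto
  then show ?thesis by auto
qed

lemma card_le_mult_independence_number:
  assumes "proper_colouring V E (\<lambda>_. {..<k}) c"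
  shows "card V \<le> k * independence_number V E"
proof -
  have "independent_set V E {x\<in>V. c x = i}" for i
    using assms unfolding proper_colouring_def independent_set_def by force
  then have class_le: "card {x\<in>V. c x = i} \<le> independence_number V E" for i
    by (rule card_le_independence_number)
  have "V = (\<Union>i<k. {x\<in>V. c x = i})"
    using assms unfolding proper_colouring_def by auto
  then have "card V \<le> (\<Sum>i<k. card {x\<in>V. c x = i})"
    by (metis card_UN_le finite_lessThan)
  also have "\<dots> \<le> (\<Sum>i<k. independence_number V E)"
    by (intro sum_mono class_le)
  finally show ?thesis by simp
qed

lemma finite_independent_set: "independent_set V E S \<Longrightarrow> finite S"
  unfolding independent_set_def using finite_subset[OF _ finite_vertices] by blast

lemma maximum_independent_set_dominating:
  assumes "independent_set V E S" "card S = independence_number V E" "r \<in> V" "r \<notin> S"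
  shows "\<exists>y\<in>S. E r y"
proof (rule ccontr)
  assume "\<not> (\<exists>y\<in>S. E r y)"
  then have "independent_set V E (insert r S)"
    using assms adj_sym adj_irrefl unfolding independent_set_def by blast
  then have "card (insert r S) \<le> card S"
    using card_le_independence_number assms(2) by simp
  then show False using finite_independent_set[OF assms(1)] assms(4) by simp
qed

lemma independent_set_exchange:
  assumes "independent_set V E S" "y \<in> S" "r \<in> V" "\<And>z. z \<in> S \<Longrightarrow> E r z \<Longrightarrow> z = y"
  shows "independent_set V E (insert r (S - {y}))"
  using assms adj_sym adj_irrefl unfolding independent_set_def by blast

lemma maximum_independent_set_farthest_from:
  obtains S where "independent_set V E S" "card S = independence_number V E"
    "\<And>S'. independent_set V E S' \<Longrightarrow> card S' = independence_number V E
       \<Longrightarrow> card (S' - D) \<le> card (S - D)"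
proof -
  obtain S0 where "independent_set V E S0 \<and> card S0 = independence_number V E"
    using independence_number_attained by blast
  moreover have "card (S - D) < Suc (card V)" if "independent_set V E S" for S
    using that finite_vertices unfolding independent_set_def
    by (meson Diff_subset card_mono le_imp_less_Suc order_trans)
  ultimately show thesis
    using that Lattices_Big.ex_has_greatest_nat[where P = "\<lambda>S. independent_set V E S \<and>
      card S = independence_number V E" and f = "\<lambda>S. card (S - D)" and b = "Suc (card V)"]
    by blast
qed

end

locale cubic_graph = finite_graph +
  assumes cubic: "cubic V E"
begin

lemma card_neighbourhood: "x \<in> V \<Longrightarrow> card {y\<in>V. E x y} = 3"
  using cubic unfolding cubic_def degree_def neighbors_def by blast

lemma neighbourhood_eq_if_card_ge:
  assumes "x \<in> V" "T \<subseteq> {y\<in>V. E x y}" "3 \<le> card T"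
  shows "{y\<in>V. E x y} = T"
  using card_subset_eq[OF finite_neighbourhood assms(2)] card_mono[OF finite_neighbourhood assms(2)]
    card_neighbourhood[OF assms(1)] assms(3)
  by simp

lemma card_disjoint_neighbourhoods_le:
  assumes "x \<in> V" "A \<inter> B = {}"
  shows "card {y\<in>A. E x y} + card {y\<in>B. E x y} \<le> 3"
proof -
  have "card {y\<in>A. E x y} + card {y\<in>B. E x y} = card ({y\<in>A. E x y} \<union> {y\<in>B. E x y})"
    using assms(2) finite_neighbourhood by (intro card_Un_disjoint[symmetric]) auto
  also have "\<dots> \<le> card {y\<in>V. E x y}"
    by (intro card_mono finite_neighbourhood) (blast dest: adj_in_vertices(2))
  finally show ?thesis using card_neighbourhood[OF assms(1)] by simp
qed

text \<open>Moving \<open>u\<close> across the cut removes its edges into \<open>A\<close> and adds its remaining ones.\<close>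
lemma card_cut_edges_insert:
  assumes "u \<in> V" "u \<notin> A"
  shows "card (cut_edges (insert u A)) + 2 * card {x\<in>A. E u x} = card (cut_edges A) + 3"
proof -
  define into_u where "into_u = (\<lambda>x. (x, u)) ` {x\<in>A. E u x}"
  define from_u where "from_u = Pair u ` {y\<in>V - A. E u y}"
  have cut_insert: "cut_edges (insert u A) = (cut_edges A - into_u) \<union> from_u"
    unfolding cut_edges_def into_u_def from_u_def using adj_irrefl by (auto dest: adj_sym)
  have into_u_sub: "into_u \<subseteq> cut_edges A"
    unfolding cut_edges_def into_u_def using assms by (auto dest: adj_sym)
  have card_into_u: "card into_u = card {x\<in>A. E u x}"
    unfolding into_u_def by (simp add: card_image inj_on_def)
  have card_from_u: "card from_u = card {y\<in>V - A. E u y}"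
    unfolding from_u_def by (intro card_image) (simp add: inj_on_def)
  have split: "card {x\<in>A. E u x} + card {y\<in>V - A. E u y} = 3"
  proof -
    have "card {x\<in>A. E u x} + card {y\<in>V - A. E u y}
        = card ({x\<in>A. E u x} \<union> {y\<in>V - A. E u y})"
      by (rule card_Un_disjoint[symmetric, OF finite_neighbourhood finite_neighbourhood]) blast
    also have "\<dots> = card {y\<in>V. E u y}"
      by (rule arg_cong[where f = card]) (auto dest: adj_in_vertices(2))
    finally show ?thesis using card_neighbourhood[OF assms(1)] by simp
  qed
  have "card (cut_edges (insert u A)) = card (cut_edges A - into_u) + card from_u"
    unfolding cut_insert
  proof (rule card_Un_disjoint)
    show "finite from_u" unfolding from_u_def using finite_neighbourhood by blast
    show "(cut_edges A - into_u) \<inter> from_u = {}"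
      unfolding from_u_def cut_edges_def using assms(2) by blast
  qed (use finite_cut_edges in blast)
  also have "card (cut_edges A - into_u) = card (cut_edges A) - card into_u"
    using into_u_sub finite_cut_edges by (meson card_Diff_subset finite_subset)
  finally show ?thesis
    using card_into_u card_from_u split card_mono[OF finite_cut_edges into_u_sub] by linarith
qed

lemma two_neighbours_outside_dissociation_set:
  assumes "dissociation_set V E D" "x \<in> D"
  shows "2 \<le> card {y\<in>V - D. E x y}"
proof -
  have "x \<in> V" and inside: "card {y\<in>D. E x y} \<le> 1"
    using assms unfolding dissociation_set_def by blast+
  have "card {y\<in>V. E x y} \<le> card ({y\<in>D. E x y} \<union> {y\<in>V - D. E x y})"
    by (intro card_mono) (auto intro: finite_neighbourhood)
  also have "\<dots> \<le> card {y\<in>D. E x y} + card {y\<in>V - D. E x y}"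
    by (rule card_Un_le)
  finally show ?thesis using inside card_neighbourhood[OF \<open>x \<in> V\<close>] by linarith
qed

text \<open>A vertex outside \<open>D \<union> S\<close> with two neighbours in \<open>D - S\<close> and its only \<open>S\<close>-neighbour in \<open>D\<close>
  could be exchanged into \<open>S\<close>, moving \<open>S\<close> farther from \<open>D\<close>.\<close>
lemma card_neighbours_in_dissociation_set_le:
  assumes S: "independent_set V E S" "card S = independence_number V E"
    and S_farthest: "\<And>S'. independent_set V E S' \<Longrightarrow> card S' = independence_number V E
        \<Longrightarrow> card (S' - D) \<le> card (S - D)"
    and r: "r \<in> V - D - S"
  shows "card {x\<in>D - S. E r x} \<le> 1 + card {y\<in>S - D. E r y}"
proof -
  obtain y where y: "y \<in> S" "E r y"
    using maximum_independent_set_dominating[OF S] r by blast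
  have finite_S: "finite S" using finite_independent_set[OF S(1)] .
  have nbrs_sub: "insert y {x\<in>D - S. E r x} \<subseteq> {z\<in>V. E r z}"
    using y by (auto dest: adj_in_vertices(2))
  have y_notin: "y \<notin> {x\<in>D - S. E r x}" using y by blast
  show ?thesis
  proof (cases "y \<in> D")
    case False
    then have "0 < card {y\<in>S - D. E r y}"
      using y finite_S by (subst card_gt_0_iff) auto
    moreover have "card (insert y {x\<in>D - S. E r x}) \<le> 3"
      using card_mono[OF finite_neighbourhood nbrs_sub] card_neighbourhood r by simp
    ultimately show ?thesis
      using y_notin finite_neighbourhood[of "D - S" r] by simp
  next
    case True
    show ?thesis
    proof (rule ccontr)
      assume "\<not> ?thesis"
      then have "3 \<le> card (insert y {x\<in>D - S. E r x})"
        using y_notin finite_neighbourhood[of "D - S" r] by simp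
      then have nbrs: "{z\<in>V. E r z} = insert y {x\<in>D - S. E r x}"
        using neighbourhood_eq_if_card_ge nbrs_sub r by blast
      have "independent_set V E (insert r (S - {y}))"
        using r nbrs by (intro independent_set_exchange[OF S(1) y(1)]) (auto dest: adj_in_vertices(2))
      moreover have "card (insert r (S - {y})) = card S"
        using y(1) r finite_S card_gt_0_iff[of S] by (auto simp: card.insert_remove)
      ultimately have "card (insert r (S - {y}) - D) \<le> card (S - D)"
        using S_farthest S(2) by simp
      moreover have "insert r (S - {y}) - D = insert r (S - D)"
        using True r by blast
      ultimately show False
        using r finite_S by simp
    qed
  qed
qed

text \<open>Double counting the edges between \<open>D - S\<close> and \<open>V - D\<close>.\<close>
lemma card_dissociation_set_minus_le:
  assumes D: "dissociation_set V E D"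
    and S: "independent_set V E S" "card S = independence_number V E"
    and S_farthest: "\<And>S'. independent_set V E S' \<Longrightarrow> card S' = independence_number V E
        \<Longrightarrow> card (S' - D) \<le> card (S - D)"
  shows "2 * card (D - S) \<le> 3 * card (S - D) + card (V - D - S)"
proof -
  define X where "X = D - S"
  define Y where "Y = S - D"
  define Z where "Z = V - D - S"
  have DV: "D \<subseteq> V" and SV: "S \<subseteq> V"
    using D S(1) unfolding dissociation_set_def independent_set_def by blast+
  have fin: "finite X" "finite Y" "finite Z"
    unfolding X_def Y_def Z_def using finite_subset[OF DV] finite_subset[OF SV] by simp_all
  have VD: "V - D = Y \<union> Z" "Y \<inter> Z = {}"
    unfolding Y_def Z_def using SV by blast+
  have "2 * card X = (\<Sum>x\<in>X. 2)" by simp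
  also have "\<dots> \<le> (\<Sum>x\<in>X. card {y\<in>V - D. E x y})"
    using two_neighbours_outside_dissociation_set[OF D] by (intro sum_mono) (simp add: X_def)
  also have "\<dots> = (\<Sum>r\<in>V - D. card {x\<in>X. E r x})"
    using fin VD by (intro sum_card_adjacent_swap[OF _ _ adj_sym]) auto
  also have "\<dots> = (\<Sum>r\<in>Y. card {x\<in>X. E r x}) + (\<Sum>r\<in>Z. card {x\<in>X. E r x})"
    unfolding VD(1) using fin(2,3) VD(2) by (rule sum.union_disjoint)
  also have "\<dots> \<le> (\<Sum>r\<in>Y. 3 - card {z\<in>Z. E r z}) + (\<Sum>r\<in>Z. 1 + card {y\<in>Y. E r y})"
  proof (intro add_mono sum_mono)
    show "card {x\<in>X. E r x} \<le> 3 - card {z\<in>Z. E r z}" if "r \<in> Y" for r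
      using card_disjoint_neighbourhoods_le[of r X Z] that SV
      unfolding X_def Y_def Z_def by fastforce
    show "card {x\<in>X. E r x} \<le> 1 + card {y\<in>Y. E r y}" if "r \<in> Z" for r
      using card_neighbours_in_dissociation_set_le[OF S S_farthest] that
      unfolding X_def Y_def Z_def by blast
  qed
  also have "\<dots> = 3 * card Y + card Z"
  proof -
    have "(\<Sum>r\<in>Z. card {y\<in>Y. E r y}) = (\<Sum>r\<in>Y. card {z\<in>Z. E r z})"
      using fin by (intro sum_card_adjacent_swap[OF _ _ adj_sym])
    moreover have "card {z\<in>Z. E r z} \<le> 3" if "r \<in> Y" for r
      using card_disjoint_neighbourhoods_le[of r "{}" Z] that SV unfolding Y_def by auto
    then have "(\<Sum>r\<in>Y. 3 - card {z\<in>Z. E r z}) + (\<Sum>r\<in>Y. card {z\<in>Z. E r z}) = 3 * card Y"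
      by (simp add: sum.distrib[symmetric])
    moreover have "(\<Sum>r\<in>Z. 1 + card {y\<in>Y. E r y}) = card Z + (\<Sum>r\<in>Z. card {y\<in>Y. E r y})"
      by (simp add: sum_Suc)
    ultimately show ?thesis by linarith
  qed
  finally show ?thesis unfolding X_def Y_def Z_def .
qed

lemma dissociation_bound:
  assumes D: "dissociation_set V E D"
    and S: "independent_set V E S" "card S = independence_number V E"
    and S_farthest: "\<And>S'. independent_set V E S' \<Longrightarrow> card S' = independence_number V E
        \<Longrightarrow> card (S' - D) \<le> card (S - D)"
  shows "3 * card D \<le> 2 * card S + card V"
proof -
  have DV: "D \<subseteq> V" and SV: "S \<subseteq> V"
    using D S(1) unfolding dissociation_set_def independent_set_def by blast+
  have fin: "finite D" "finite S" using finite_subset[OF DV] finite_subset[OF SV] by simp_all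
  have "card D = card (D \<inter> S) + card (D - S)" "card S = card (D \<inter> S) + card (S - D)"
    using fin card_Int_Diff[of S D] by (simp_all add: card_Int_Diff Int_commute)
  moreover have "card V = card D + card (S - D) + card (V - D - S)"
  proof -
    have "card (V - D) = card ((S - D) \<union> (V - D - S))"
      using SV by (intro arg_cong[where f = card]) blast
    also have "\<dots> = card (S - D) + card (V - D - S)"
      using fin by (intro card_Un_disjoint) auto
    finally show ?thesis using card_Diff_subset[OF fin(1) DV] card_mono[OF finite_vertices DV] by linarith
  qed
  ultimately show ?thesis
    using card_dissociation_set_minus_le[OF D S S_farthest] by linarith
qed

end

locale connected_cubic_graph = cubic_graph +
  assumes connected: "connected_graph V E"
begin

lemma component_closed_eq_vertices:
  assumes "component_closed V E K" "K \<noteq> {}"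
  shows "K = V"
proof
  show "K \<subseteq> V" using assms(1) unfolding component_closed_def by blast
  obtain x0 where "x0 \<in> K" using assms(2) by blast
  show "V \<subseteq> K"
  proof
    fix v assume "v \<in> V"
    then have "(\<lambda>x y. E x y \<and> x \<in> V \<and> y \<in> V)\<^sup>*\<^sup>* x0 v"
      using connected \<open>x0 \<in> K\<close> \<open>K \<subseteq> V\<close> unfolding connected_graph_def by blast
    then show "v \<in> K"
      by (induction rule: rtranclp_induct) (use \<open>x0 \<in> K\<close> assms(1) in \<open>auto simp: component_closed_def\<close>)
  qed
qed

text \<open>Within a proper subset some vertex loses a neighbour, which lets the greedy colouring start.\<close>
lemma colourable_proper_subset:
  assumes "A \<subseteq> V" "A \<noteq> V"
  shows "\<exists>c. proper_colouring A E (\<lambda>_. {..<3::nat}) c"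
proof (rule list_colouring_exists)
  show "finite A" using finite_subset[OF assms(1) finite_vertices] .
  show "card {y\<in>A. E x y} \<le> card {..<3::nat}" if "x \<in> A" for x
    using card_disjoint_neighbourhoods_le[of x A "{}"] that assms(1) by (simp add: subset_iff)
  show "\<exists>x\<in>K. card {y\<in>A. E x y} < card {..<3::nat}"
    if K: "component_closed A E K" "K \<noteq> {}" for K
  proof (rule ccontr)
    assume "\<not> ?thesis"
    then have full: "{y\<in>V. E x y} = {y\<in>A. E x y}" if "x \<in> K" for x
      using that K(1) assms(1) unfolding component_closed_def
      by (intro neighbourhood_eq_if_card_ge) auto
    have "component_closed V E K"
      unfolding component_closed_def
    proof (intro conjI ballI allI impI)
      show "K \<subseteq> V" using K(1) assms(1) unfolding component_closed_def by blast
      fix x y assume "x \<in> K" "y \<in> V" "E x y"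
      then have "y \<in> A" using full[of x] by blast
      then show "y \<in> K" using K(1) \<open>x \<in> K\<close> \<open>E x y\<close> unfolding component_closed_def by blast
    qed
    then have "K = V" using component_closed_eq_vertices K(2) by blast
    then show False using K(1) assms unfolding component_closed_def by blast
  qed
qed (simp_all add: adj_irrefl adj_sym[of b a for a b])

text \<open>Colour both sides, then rotate the colours of one side modulo 3 so that none of the
  at most two cut edges is monochromatic.\<close>
lemma colourable_if_small_cut:
  assumes "A \<subseteq> V" "A \<noteq> {}" "A \<noteq> V" "card (cut_edges A) \<le> 2"
  shows "\<exists>c. proper_colouring V E (\<lambda>_. {..<3::nat}) c"
proof -
  obtain c1 where c1: "proper_colouring A E (\<lambda>_. {..<3::nat}) c1"
    using colourable_proper_subset assms by blast
  obtain c2 where c2: "proper_colouring (V - A) E (\<lambda>_. {..<3::nat}) c2"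
    using colourable_proper_subset[of "V - A"] assms by blast
  have "c2 y < 3" if "(x, y) \<in> cut_edges A" for x y
    using c2 that unfolding cut_edges_def proper_colouring_def by blast
  then obtain k where k: "k < 3" "\<And>x y. (x, y) \<in> cut_edges A \<Longrightarrow> c1 x \<noteq> (c2 y + k) mod 3"
    using exists_rotation_avoiding[OF finite_cut_edges assms(4), where f = c1] by metis
  define c where "c x = (if x \<in> A then c1 x else (c2 x + k) mod 3)" for x
  have across: "c x \<noteq> c y" if "x \<in> A" "y \<in> V - A" "E x y" for x y
    using k(2)[of x y] that unfolding c_def cut_edges_def by auto
  have "c x \<noteq> c y" if "x \<in> V" "y \<in> V" "E x y" for x y
  proof (cases "x \<in> A"; cases "y \<in> A")
    assume "x \<in> A" "y \<in> A"
    then show ?thesis using c1 that(3) unfolding c_def proper_colouring_def by simp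
  next
    assume "x \<in> A" "y \<notin> A"
    then show ?thesis using across that by blast
  next
    assume "x \<notin> A" "y \<in> A"
    then show ?thesis using across[of y x] adj_sym[OF that(3)] that by auto
  next
    assume "x \<notin> A" "y \<notin> A"
    then have "c2 x \<noteq> c2 y" "c2 x < 3" "c2 y < 3"
      using c2 that unfolding proper_colouring_def by auto
    then show ?thesis
      using \<open>x \<notin> A\<close> \<open>y \<notin> A\<close> rotate_mod_3_inj[of "c2 x" "c2 y" k] k(1) unfolding c_def by auto
  qed
  moreover have "c x \<in> {..<3}" if "x \<in> V" for x
    using c1 unfolding c_def proper_colouring_def by auto
  ultimately have "proper_colouring V E (\<lambda>_. {..<3::nat}) c"
    unfolding proper_colouring_def by blast
  then show ?thesis by (rule exI[where x = c])
qed

text \<open>Otherwise every closed neighbourhood would be a clique, and the graph would be \<open>K\<^sub>4\<close>.\<close>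
lemma exists_nonadjacent_neighbours:
  assumes "4 < card V"
  shows "\<exists>v u w. v \<in> V \<and> E v u \<and> E v w \<and> u \<noteq> w \<and> \<not> E u w"
proof (rule ccontr)
  assume "\<not> ?thesis"
  then have clique: "E u w" if "E v u" "E v w" "u \<noteq> w" for v u w
    using that adj_in_vertices(1) by blast
  obtain v where v: "v \<in> V" using assms by fastforce
  define N where "N = {y\<in>V. E v y}"
  have "v \<notin> N" unfolding N_def using adj_irrefl by blast
  have card_N: "card N = 3" unfolding N_def using card_neighbourhood[OF v] .
  have "finite N" unfolding N_def by (rule finite_neighbourhood)
  have nbrs: "{y\<in>V. E x y} = insert v (N - {x})" if "x \<in> N" for x
  proof (rule neighbourhood_eq_if_card_ge)
    show "x \<in> V" using that unfolding N_def by blast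
    show "insert v (N - {x}) \<subseteq> {y\<in>V. E x y}"
      using that v clique[of v x] unfolding N_def by (auto intro: adj_sym)
    show "3 \<le> card (insert v (N - {x}))"
      using that \<open>v \<notin> N\<close> card_N \<open>finite N\<close> by simp
  qed
  have "component_closed V E (insert v N)"
    unfolding component_closed_def using v nbrs unfolding N_def by blast
  then have "insert v N = V" using component_closed_eq_vertices by blast
  moreover have "card (insert v N) = 4"
    using \<open>v \<notin> N\<close> card_N \<open>finite N\<close> by simp
  ultimately show False using assms by simp
qed

text \<open>If \<open>K\<close> missed a vertex, the four cuts around \<open>K\<close>, \<open>K + u\<close>, \<open>K + w\<close>, \<open>K + u + w\<close> would force
  \<open>u\<close> and \<open>w\<close> to send equally many edges into \<open>K\<close>, three in total: a parity contradiction.\<close>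
lemma component_closed_remove_two:
  assumes edge_connected: "\<And>A. A \<subseteq> V \<Longrightarrow> A \<noteq> {} \<Longrightarrow> A \<noteq> V \<Longrightarrow> 3 \<le> card (cut_edges A)"
    and uw: "u \<in> V" "w \<in> V" "u \<noteq> w" "\<not> E u w"
    and K: "component_closed (V - {u, w}) E K" "K \<noteq> {}"
  shows "K = V - {u, w}"
proof (rule ccontr)
  assume "K \<noteq> V - {u, w}"
  then obtain v where v: "v \<in> V" "v \<notin> K" "v \<noteq> u" "v \<noteq> w"
    using K(1) unfolding component_closed_def by blast
  have KV: "K \<subseteq> V" "u \<notin> K" "w \<notin> K" using K(1) unfolding component_closed_def by blast+
  define a where "a = card {x\<in>K. E u x}"
  define b where "b = card {x\<in>K. E w x}"
  have cut_K: "card (cut_edges K) = a + b"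
    unfolding a_def b_def using card_cut_edges_closed_remove_two K(1) uw(3) .
  have cut_Ku: "card (cut_edges (insert u K)) + 2 * a = card (cut_edges K) + 3"
    unfolding a_def using card_cut_edges_insert uw(1) KV(2) .
  have cut_Kw: "card (cut_edges (insert w K)) + 2 * b = card (cut_edges K) + 3"
    unfolding b_def using card_cut_edges_insert uw(2) KV(3) .
  have "{x\<in>insert u K. E w x} = {x\<in>K. E w x}" using uw(4) adj_sym by blast
  then have cut_Kuw: "card (cut_edges (insert w (insert u K))) + 2 * b = card (cut_edges (insert u K)) + 3"
    unfolding b_def using card_cut_edges_insert[of w "insert u K"] uw KV(3) by simp
  have big: "3 \<le> card (cut_edges A)" if "K \<subseteq> A" "A \<subseteq> V" "v \<notin> A" for A
    using edge_connected that K(2) v(1) by blast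
  have "3 \<le> card (cut_edges K)" "3 \<le> card (cut_edges (insert u K))"
    "3 \<le> card (cut_edges (insert w K))" "3 \<le> card (cut_edges (insert w (insert u K)))"
    using big[of K] big[of "insert u K"] big[of "insert w K"] big[of "insert w (insert u K)"]
      KV(1) uw(1,2) v(2-4) by auto
  then have "a = b" "a + b = 3" using cut_K cut_Ku cut_Kw cut_Kuw by linarith+
  then show False by presburger
qed

text \<open>Colours \<open>1, 2\<close> are reserved for the neighbours of \<open>u\<close> and \<open>w\<close>, which will both get colour \<open>0\<close>;
  \<open>v\<close> then sees at most two colours, so the greedy list colouring of the (connected) rest
  finishes at \<open>v\<close>.\<close>
lemma list_colourable_remove_two:
  assumes edge_connected: "\<And>A. A \<subseteq> V \<Longrightarrow> A \<noteq> {} \<Longrightarrow> A \<noteq> V \<Longrightarrow> 3 \<le> card (cut_edges A)"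
    and vuw: "v \<in> V" "E v u" "E v w" "u \<noteq> w" "\<not> E u w"
  shows "\<exists>c. proper_colouring (V - {u, w}) E
           (\<lambda>x. if E x u \<or> E x w then {1, 2} else {..<3::nat}) c"
    (is "\<exists>c. proper_colouring ?U E ?L c")
proof (rule list_colouring_exists)
  have uw: "u \<in> V" "w \<in> V" using vuw adj_in_vertices(2) by blast+
  have card_L: "card (?L x) = (if E x u \<or> E x w then 2 else 3)" for x
    by simp
  have split: "card {y\<in>?U. E x y} + card {y\<in>{u, w}. E x y} \<le> 3" if "x \<in> ?U" for x
    using card_disjoint_neighbourhoods_le[of x ?U "{u, w}"] that by blast
  show "finite ?U" by simp
  show "E b a" if "E a b" for a b using adj_sym that .
  show "\<not> E a a" for a by (rule adj_irrefl)
  show "finite (?L x)" for x by simp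
  show "card {y\<in>?U. E x y} \<le> card (?L x)" if "x \<in> ?U" for x
  proof (cases "E x u \<or> E x w")
    case True
    then have "{y\<in>{u, w}. E x y} \<noteq> {}" by blast
    then have "1 \<le> card {y\<in>{u, w}. E x y}" by (simp add: Suc_leI card_gt_0_iff)
    then show ?thesis using split[OF that] True card_L[of x] by simp
  next
    case False
    then show ?thesis using split[OF that] card_L[of x] by simp
  qed
  show "\<exists>x\<in>K. card {y\<in>?U. E x y} < card (?L x)" if "component_closed ?U E K" "K \<noteq> {}" for K
  proof
    have "K = ?U"
      using component_closed_remove_two[OF edge_connected uw vuw(4,5)] that by blast
    moreover have "v \<noteq> u" "v \<noteq> w" using vuw(2,3) adj_irrefl by blast+
    ultimately show "v \<in> K" using vuw(1) by blast
    have "{y\<in>{u, w}. E v y} = {u, w}" using vuw(2,3) by blast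
    then show "card {y\<in>?U. E v y} < card (?L v)"
      using split[OF \<open>v \<in> K\<close>[unfolded \<open>K = ?U\<close>]] card_L[of v] vuw(2,4) by simp
  qed
qed

lemma colourable_if_edge_connected:
  assumes edge_connected: "\<And>A. A \<subseteq> V \<Longrightarrow> A \<noteq> {} \<Longrightarrow> A \<noteq> V \<Longrightarrow> 3 \<le> card (cut_edges A)"
    and "4 < card V"
  shows "\<exists>c. proper_colouring V E (\<lambda>_. {..<3::nat}) c"
proof -
  obtain v u w where vuw: "v \<in> V" "E v u" "E v w" "u \<noteq> w" "\<not> E u w"
    using exists_nonadjacent_neighbours assms(2) by blast
  define U where "U = V - {u, w}"
  obtain c where c: "proper_colouring U E (\<lambda>x. if E x u \<or> E x w then {1, 2} else {..<3::nat}) c"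
    using list_colourable_remove_two[OF edge_connected vuw] unfolding U_def by blast
  have nonzero: "c x \<noteq> 0" if "x \<in> U" "E x u \<or> E x w" for x
    using c that unfolding proper_colouring_def by fastforce
  define c' where "c' x = (if x \<in> U then c x else 0)" for x
  have "c' x \<noteq> c' y" if "x \<in> V" "y \<in> V" "E x y" for x y
  proof (cases "x \<in> U"; cases "y \<in> U")
    assume "x \<in> U" "y \<in> U"
    then show ?thesis using c that(3) unfolding c'_def proper_colouring_def by simp
  next
    assume "x \<in> U" "y \<notin> U"
    then show ?thesis using nonzero[of x] that unfolding c'_def U_def by auto
  next
    assume "x \<notin> U" "y \<in> U"
    then show ?thesis using nonzero[of y] that adj_sym[OF that(3)] unfolding c'_def U_def by auto
  next
    assume "x \<notin> U" "y \<notin> U"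
    then show ?thesis using that vuw(5) adj_irrefl adj_sym[OF that(3)] unfolding U_def by auto
  qed
  moreover have "c' x \<in> {..<3}" for x
    using c unfolding c'_def proper_colouring_def by (auto split: if_splits)
  ultimately have "proper_colouring V E (\<lambda>_. {..<3::nat}) c'"
    unfolding proper_colouring_def by blast
  then show ?thesis by (rule exI[where x = c'])
qed

theorem three_colourable:
  assumes "4 < card V"
  shows "\<exists>c. proper_colouring V E (\<lambda>_. {..<3::nat}) c"
proof (cases "\<exists>A. A \<subseteq> V \<and> A \<noteq> {} \<and> A \<noteq> V \<and> card (cut_edges A) \<le> 2")
  case True
  then show ?thesis using colourable_if_small_cut by blast
next
  case False
  have "3 \<le> card (cut_edges A)" if "A \<subseteq> V" "A \<noteq> {}" "A \<noteq> V" for A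
  proof -
    have "\<not> card (cut_edges A) \<le> 2" using False that by blast
    then show ?thesis by linarith
  qed
  then show ?thesis using colourable_if_edge_connected assms by blast
qed

end

theorem theorem1:
  fixes V :: "'a set" and E :: "'a \<Rightarrow> 'a \<Rightarrow> bool"
  assumes "simple_graph V E" and "connected_graph V E" and "cubic V E"
    and "card V \<ge> 6"
  shows "real (independence_number V E) \<ge> 3 / 5 * real (dissociation_number V E)"
proof -
  interpret connected_cubic_graph V E
    using assms(1-3) by unfold_locales
  obtain c where "proper_colouring V E (\<lambda>_. {..<3::nat}) c"
    using three_colourable assms(4) by auto
  then have colour_bound: "card V \<le> 3 * independence_number V E"
    by (rule card_le_mult_independence_number)
  obtain D where D: "dissociation_set V E D" "card D = dissociation_number V E"
    using dissociation_number_attained by blast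
  obtain S where S: "independent_set V E S" "card S = independence_number V E"
    and S_farthest: "\<And>S'. independent_set V E S' \<Longrightarrow> card S' = independence_number V E
       \<Longrightarrow> card (S' - D) \<le> card (S - D)"
    using maximum_independent_set_farthest_from by blast
  have "3 * card D \<le> 2 * card S + card V"
    using dissociation_bound[OF D(1) S S_farthest] .
  then have "real (3 * dissociation_number V E) \<le> real (5 * independence_number V E)"
    using colour_bound S(2) D(2) by linarith
  then show ?thesis by simp
qed

end
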